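(* Let $\mathcal{D}=(\mathcal{G}, X, Z, T, T', Y, Y')$ be random quantities on a probability space whose joint distribution (with densities, denoted generically by $p$) follows the causal structure of the Bayesian network with edges $X\to Z$, $\mathcal{G}\to Z$, $Z\to Y$, $T\to Y$, $Z\to Y'$, $T'\to Y'$, and optionally $X\to \mathcal{G}$, $X\to T$, $X\to T'$; that is, the joint density factorizes as $$p(\mathcal{G}, X, Z, T, T', Y, Y') = p(X)\,p(\mathcal{G}\mid X)\,p(T\mid X)\,p(T'\mid X)\,p(Z\mid \mathcal{G}, X)\,p(Y\mid Z, T)\,p(Y'\mid Z, T'),$$ where the factors $p(\mathcal{G}\mid X)$, $p(T\mid X)$, $p(T'\mid X)$ may or may not actually depend on $X$. Define $$J(\mathcal{D}) = \log p(Y'\mid Y, \mathcal{G}, X, T, T') + \log p(Y\mid \mathcal{G}, X, T).$$ Then $$J(\mathcal{D}) \ge \mathbb{E}_{p(Z\mid Y, \mathcal{G}, X, T)} \log p(Y\mid Z, T) + \log p(Y'\mid \mathcal{G}, X, T') - \mathrm{KL}\big[p(Z\mid Y, \mathcal{G}, X, T)\,\big\|\, p(Z\mid Y', \mathcal{G}, X, T')\big].$$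
   Context: $Y\in\mathbb{R}^n$ is an outcome vector (e.g. gene expressions), $X$ is a vector of covariates, $T$ is a treatment, $Z\in\mathbb{R}^d$ is an unobserved latent feature vector, $T'$ is a counterfactual treatment and $Y'$ the corresponding counterfactual outcome (unobserved). $\mathcal{G}=(\mathcal{V},\mathcal{E})$ is a graph with node feature matrix $\mathcal{V}\in\mathbb{R}^{n\times v}$ and adjacency matrix $\mathcal{E}\in\{0,1\}^{n\times n}$, treated as a (possibly deterministic) random variable. $\mathrm{KL}$ denotes Kullback–Leibler divergence, and all conditional densities appearing are assumed to exist and be positive. *)

theory Defs
  imports "HOL-Probability.Probability"
begin

text \<open>
Variables: G :: 'g (measure MG), X :: 'x (MX), Z :: 'z (MZ), T and T' :: 't (MT),
Y and Y' :: 'y (MY).  The joint density p (w.r.t. the product of the reference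
measures) is a function  p g x z t tp y yp.  Marginal densities are obtained by
integrating out variables (nonnegative integrals), conditional densities are
ratios of marginal densities, exactly as the generic notation p(A | B) = p(A,B)/p(B).
\<close>

type_synonym ('g,'x,'z,'t,'y) jdens = "'g \<Rightarrow> 'x \<Rightarrow> 'z \<Rightarrow> 't \<Rightarrow> 't \<Rightarrow> 'y \<Rightarrow> 'y \<Rightarrow> real"

definition m_YpYGXTTp :: "'z measure \<Rightarrow> ('g,'x,'z,'t,'y) jdens \<Rightarrow> 'g \<Rightarrow> 'x \<Rightarrow> 't \<Rightarrow> 't \<Rightarrow> 'y \<Rightarrow> 'y \<Rightarrow> ennreal" where
  "m_YpYGXTTp MZ p g x t tp y yp = (\<integral>\<^sup>+ z. ennreal (p g x z t tp y yp) \<partial>MZ)"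

definition m_YGXTTp :: "'z measure \<Rightarrow> 'y measure \<Rightarrow> ('g,'x,'z,'t,'y) jdens \<Rightarrow> 'g \<Rightarrow> 'x \<Rightarrow> 't \<Rightarrow> 't \<Rightarrow> 'y \<Rightarrow> ennreal" where
  "m_YGXTTp MZ MY p g x t tp y = (\<integral>\<^sup>+ z. \<integral>\<^sup>+ yp. ennreal (p g x z t tp y yp) \<partial>MY \<partial>MZ)"

definition m_YGXT :: "'z measure \<Rightarrow> 't measure \<Rightarrow> 'y measure \<Rightarrow> ('g,'x,'z,'t,'y) jdens \<Rightarrow> 'g \<Rightarrow> 'x \<Rightarrow> 't \<Rightarrow> 'y \<Rightarrow> ennreal" where
  "m_YGXT MZ MT MY p g x t y = (\<integral>\<^sup>+ z. \<integral>\<^sup>+ tp. \<integral>\<^sup>+ yp. ennreal (p g x z t tp y yp) \<partial>MY \<partial>MT \<partial>MZ)"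

definition m_GXT :: "'z measure \<Rightarrow> 't measure \<Rightarrow> 'y measure \<Rightarrow> ('g,'x,'z,'t,'y) jdens \<Rightarrow> 'g \<Rightarrow> 'x \<Rightarrow> 't \<Rightarrow> ennreal" where
  "m_GXT MZ MT MY p g x t = (\<integral>\<^sup>+ z. \<integral>\<^sup>+ tp. \<integral>\<^sup>+ y. \<integral>\<^sup>+ yp. ennreal (p g x z t tp y yp) \<partial>MY \<partial>MY \<partial>MT \<partial>MZ)"

definition m_ZYGXT :: "'t measure \<Rightarrow> 'y measure \<Rightarrow> ('g,'x,'z,'t,'y) jdens \<Rightarrow> 'g \<Rightarrow> 'x \<Rightarrow> 't \<Rightarrow> 'y \<Rightarrow> 'z \<Rightarrow> ennreal" where
  "m_ZYGXT MT MY p g x t y z = (\<integral>\<^sup>+ tp. \<integral>\<^sup>+ yp. ennreal (p g x z t tp y yp) \<partial>MY \<partial>MT)"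

definition m_YpGXTp :: "'z measure \<Rightarrow> 't measure \<Rightarrow> 'y measure \<Rightarrow> ('g,'x,'z,'t,'y) jdens \<Rightarrow> 'g \<Rightarrow> 'x \<Rightarrow> 't \<Rightarrow> 'y \<Rightarrow> ennreal" where
  "m_YpGXTp MZ MT MY p g x tp yp = (\<integral>\<^sup>+ z. \<integral>\<^sup>+ t. \<integral>\<^sup>+ y. ennreal (p g x z t tp y yp) \<partial>MY \<partial>MT \<partial>MZ)"

definition m_GXTp :: "'z measure \<Rightarrow> 't measure \<Rightarrow> 'y measure \<Rightarrow> ('g,'x,'z,'t,'y) jdens \<Rightarrow> 'g \<Rightarrow> 'x \<Rightarrow> 't \<Rightarrow> ennreal" where
  "m_GXTp MZ MT MY p g x tp = (\<integral>\<^sup>+ z. \<integral>\<^sup>+ t. \<integral>\<^sup>+ y. \<integral>\<^sup>+ yp. ennreal (p g x z t tp y yp) \<partial>MY \<partial>MY \<partial>MT \<partial>MZ)"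

definition m_ZYpGXTp :: "'t measure \<Rightarrow> 'y measure \<Rightarrow> ('g,'x,'z,'t,'y) jdens \<Rightarrow> 'g \<Rightarrow> 'x \<Rightarrow> 't \<Rightarrow> 'y \<Rightarrow> 'z \<Rightarrow> ennreal" where
  "m_ZYpGXTp MT MY p g x tp yp z = (\<integral>\<^sup>+ t. \<integral>\<^sup>+ y. ennreal (p g x z t tp y yp) \<partial>MY \<partial>MT)"

definition m_ZTY :: "'g measure \<Rightarrow> 'x measure \<Rightarrow> 't measure \<Rightarrow> 'y measure \<Rightarrow> ('g,'x,'z,'t,'y) jdens \<Rightarrow> 'z \<Rightarrow> 't \<Rightarrow> 'y \<Rightarrow> ennreal" where
  "m_ZTY MG MX MT MY p z t y = (\<integral>\<^sup>+ g. \<integral>\<^sup>+ x. \<integral>\<^sup>+ tp. \<integral>\<^sup>+ yp. ennreal (p g x z t tp y yp) \<partial>MY \<partial>MT \<partial>MX \<partial>MG)"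

definition m_ZT :: "'g measure \<Rightarrow> 'x measure \<Rightarrow> 't measure \<Rightarrow> 'y measure \<Rightarrow> ('g,'x,'z,'t,'y) jdens \<Rightarrow> 'z \<Rightarrow> 't \<Rightarrow> ennreal" where
  "m_ZT MG MX MT MY p z t = (\<integral>\<^sup>+ g. \<integral>\<^sup>+ x. \<integral>\<^sup>+ tp. \<integral>\<^sup>+ y. \<integral>\<^sup>+ yp. ennreal (p g x z t tp y yp) \<partial>MY \<partial>MY \<partial>MT \<partial>MX \<partial>MG)"

definition cond :: "ennreal \<Rightarrow> ennreal \<Rightarrow> real" where
  "cond num den = enn2real num / enn2real den"

definition c_Yp_given_YGXTTp where
  "c_Yp_given_YGXTTp MZ MY p g x t tp y yp =
     cond (m_YpYGXTTp MZ p g x t tp y yp) (m_YGXTTp MZ MY p g x t tp y)"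

definition c_Y_given_GXT where
  "c_Y_given_GXT MZ MT MY p g x t y = cond (m_YGXT MZ MT MY p g x t y) (m_GXT MZ MT MY p g x t)"

definition c_Yp_given_GXTp where
  "c_Yp_given_GXTp MZ MT MY p g x tp yp = cond (m_YpGXTp MZ MT MY p g x tp yp) (m_GXTp MZ MT MY p g x tp)"

definition c_Z_given_YGXT where
  "c_Z_given_YGXT MZ MT MY p g x t y z = cond (m_ZYGXT MT MY p g x t y z) (m_YGXT MZ MT MY p g x t y)"

definition c_Z_given_YpGXTp where
  "c_Z_given_YpGXTp MZ MT MY p g x tp yp z = cond (m_ZYpGXTp MT MY p g x tp yp z) (m_YpGXTp MZ MT MY p g x tp yp)"

definition c_Y_given_ZT where
  "c_Y_given_ZT MG MX MT MY p z t y = cond (m_ZTY MG MX MT MY p z t y) (m_ZT MG MX MT MY p z t)"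

end

theory Submission
  imports Defs
begin

(* By the factorization, every density in the statement is a quantity of one latent-variable
   model over Z with prior p(Z | G, X) and the two likelihoods a z = p(y | z, t) and
   b z = p(y' | z, t'): p(Y | G, X, T) and p(Y' | G, X, T') are the marginal likelihoods A and B
   of a and b, p(Y' | Y, G, X, T, T') = E / A where E is the marginal likelihood of a * b,
   the two conditionals of Z are the posteriors q_a and q_b, and p(Y | Z, T) = a.
   As ln (q_a / q_b) = ln a - ln b + ln B - ln A, the right-hand side equals
   E_{q_a} [ln b] + ln A, and Jensen's inequality for ln bounds E_{q_a} [ln b] by
   ln E_{q_a} [b] = ln (E / A). *)

lemma nn_integral_eq_cmult:
  fixes h :: "'a \<Rightarrow> real"
  assumes "h \<in> borel_measurable M" "0 \<le> c" "\<And>w. w \<in> space M \<Longrightarrow> f w = ennreal (c * h w)"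
  shows "(\<integral>\<^sup>+w. f w \<partial>M) = ennreal c * (\<integral>\<^sup>+w. ennreal (h w) \<partial>M)"
proof -
  have "(\<integral>\<^sup>+w. f w \<partial>M) = (\<integral>\<^sup>+w. ennreal c * ennreal (h w) \<partial>M)"
    using assms(2,3) by (intro nn_integral_cong) (simp add: ennreal_mult')
  also have "\<dots> = ennreal c * (\<integral>\<^sup>+w. ennreal (h w) \<partial>M)"
    using assms(1) by (intro nn_integral_cmult) simp
  finally show ?thesis .
qed

lemma nn_integral_eq_cmult_normalized:
  fixes h :: "'a \<Rightarrow> real"
  assumes "h \<in> borel_measurable M" "(\<integral>\<^sup>+w. ennreal (h w) \<partial>M) = 1" "0 \<le> c"
    "\<And>w. w \<in> space M \<Longrightarrow> f w = ennreal (c * h w)"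
  shows "(\<integral>\<^sup>+w. f w \<partial>M) = ennreal c"
  using nn_integral_eq_cmult[of h M c f] assms by simp

lemma emeasure_space_neq_0_if_nn_integral_neq_0:
  assumes "(\<integral>\<^sup>+w. f w \<partial>M) \<noteq> 0"
  shows "emeasure M (space M) \<noteq> 0"
proof
  assume "emeasure M (space M) = 0"
  then have "AE w in M. f w = 0" by (rule emeasure_0_AE)
  then have "(\<integral>\<^sup>+w. f w \<partial>M) = (\<integral>\<^sup>+w. 0 \<partial>M)" by (rule nn_integral_cong_AE)
  with assms show False by simp
qed

lemma nn_integral_pos:
  assumes "f \<in> borel_measurable M" "\<And>w. w \<in> space M \<Longrightarrow> 0 < f w"
    "emeasure M (space M) \<noteq> 0"
  shows "0 < (\<integral>\<^sup>+w. f w \<partial>M)"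
proof (rule ccontr)
  assume "\<not> 0 < (\<integral>\<^sup>+w. f w \<partial>M)"
  then have "AE w in M. f w = 0" using assms(1) by (simp add: nn_integral_0_iff_AE)
  moreover have "AE w in M. f w \<noteq> 0" using assms(2) by (intro AE_I2) (metis less_irrefl)
  ultimately have "AE w in M. False" by eventually_elim simp
  with assms(3) show False by (simp add: eventually_False ae_filter_eq_bot_iff)
qed

lemma (in prob_space) integral_ln_le_ln_expectation:
  fixes f :: "'a \<Rightarrow> real"
  assumes "integrable M f" "AE w in M. 0 < f w" "integrable M (\<lambda>w. ln (f w))"
  shows "(\<integral>w. ln (f w) \<partial>M) \<le> ln (expectation f)"
proof -
  have "- ln (expectation f) \<le> (\<integral>w. - ln (f w) \<partial>M)"
  proof (rule jensens_inequality[where I="{0<..}" and a=0])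
    show "convex_on {0<..} (\<lambda>x. - ln x)" using ln_concave by (simp add: concave_on_def)
  qed (use assms in auto)
  then show ?thesis by simp
qed

(* enn2real maps an infinite integral to 0, hence the finiteness hypotheses below. *)
definition marginal_likelihood :: "'a measure \<Rightarrow> ('a \<Rightarrow> real) \<Rightarrow> ('a \<Rightarrow> real) \<Rightarrow> real" where
  "marginal_likelihood M prior f = enn2real (\<integral>\<^sup>+z. ennreal (prior z * f z) \<partial>M)"

definition posterior :: "'a measure \<Rightarrow> ('a \<Rightarrow> real) \<Rightarrow> ('a \<Rightarrow> real) \<Rightarrow> 'a \<Rightarrow> real" where
  "posterior M prior f z = prior z * f z / marginal_likelihood M prior f"

lemma marginal_likelihood_pos:
  assumes "prior \<in> borel_measurable M" "f \<in> borel_measurable M"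
    "\<And>z. z \<in> space M \<Longrightarrow> 0 < prior z" "\<And>z. z \<in> space M \<Longrightarrow> 0 < f z"
    "emeasure M (space M) \<noteq> 0" "(\<integral>\<^sup>+z. ennreal (prior z * f z) \<partial>M) < \<infinity>"
  shows "0 < marginal_likelihood M prior f"
proof -
  have "0 < (\<integral>\<^sup>+z. ennreal (prior z * f z) \<partial>M)"
    using assms(1-5) by (intro nn_integral_pos) auto
  with assms(6) show ?thesis by (simp add: marginal_likelihood_def enn2real_positive_iff)
qed

lemma nn_integral_posterior:
  assumes "prior \<in> borel_measurable M" "f \<in> borel_measurable M" "h \<in> borel_measurable M"
    "\<And>z. z \<in> space M \<Longrightarrow> 0 \<le> prior z" "\<And>z. z \<in> space M \<Longrightarrow> 0 \<le> f z"
  shows "(\<integral>\<^sup>+z. ennreal (h z) \<partial>density M (\<lambda>z. ennreal (posterior M prior f z))) =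
    ennreal (1 / marginal_likelihood M prior f) * (\<integral>\<^sup>+z. ennreal (prior z * f z * h z) \<partial>M)"
proof -
  have "(\<integral>\<^sup>+z. ennreal (h z) \<partial>density M (\<lambda>z. ennreal (posterior M prior f z))) =
      (\<integral>\<^sup>+z. ennreal (posterior M prior f z) * ennreal (h z) \<partial>M)"
    using assms(1-3) by (intro nn_integral_density) (auto simp: posterior_def)
  also have "\<dots> =
      ennreal (1 / marginal_likelihood M prior f) * (\<integral>\<^sup>+z. ennreal (prior z * f z * h z) \<partial>M)"
    using assms by (intro nn_integral_eq_cmult)
      (auto simp: posterior_def marginal_likelihood_def ennreal_mult'' ennreal_mult'[symmetric])
  finally show ?thesis .
qed

lemma prob_space_posterior:
  assumes "prior \<in> borel_measurable M" "f \<in> borel_measurable M"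
    "\<And>z. z \<in> space M \<Longrightarrow> 0 \<le> prior z" "\<And>z. z \<in> space M \<Longrightarrow> 0 \<le> f z"
    "0 < marginal_likelihood M prior f"
  shows "prob_space (density M (\<lambda>z. ennreal (posterior M prior f z)))"
proof (rule prob_spaceI)
  have "(\<integral>\<^sup>+z. ennreal (prior z * f z) \<partial>M) = ennreal (marginal_likelihood M prior f)"
    using assms(5) by (simp add: marginal_likelihood_def enn2real_positive_iff less_top)
  then have "(\<integral>\<^sup>+z. ennreal 1 \<partial>density M (\<lambda>z. ennreal (posterior M prior f z))) = 1"
    using assms nn_integral_posterior[of prior M f "\<lambda>_. 1"] by (simp add: ennreal_mult''[symmetric])
  then show "emeasure (density M (\<lambda>z. ennreal (posterior M prior f z)))
      (space (density M (\<lambda>z. ennreal (posterior M prior f z)))) = 1"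
    by simp
qed

lemma (in sigma_finite_measure) KL_density_density_eq_integral_ln:
  fixes f g :: "'a \<Rightarrow> real"
  assumes "f \<in> borel_measurable M" "g \<in> borel_measurable M"
    "\<And>z. z \<in> space M \<Longrightarrow> 0 < f z" "\<And>z. z \<in> space M \<Longrightarrow> 0 \<le> g z"
  shows "KL_divergence (exp 1) (density M f) (density M g) = (\<integral>z. ln (g z / f z) \<partial>density M g)"
proof -
  have "KL_divergence (exp 1) (density M f) (density M g) = (\<integral>z. g z * log (exp 1) (g z / f z) \<partial>M)"
    using assms by (intro KL_density_density AE_I2) (auto intro: less_imp_le dest: assms(3))
  also have "\<dots> = (\<integral>z. ln (g z / f z) \<partial>density M g)"
    using assms by (subst integral_density) (auto simp: log_def)
  finally show ?thesis .
qed

lemma ln_posterior_ratio: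
  assumes "0 < prior z" "0 < a z" "0 < b z"
    "0 < marginal_likelihood M prior a" "0 < marginal_likelihood M prior b"
  shows "ln (posterior M prior a z / posterior M prior b z) =
    ln (a z) - ln (b z) + (ln (marginal_likelihood M prior b) - ln (marginal_likelihood M prior a))"
  using assms by (simp add: posterior_def ln_div ln_mult)

lemma integral_posterior:
  assumes "prior \<in> borel_measurable M" "a \<in> borel_measurable M" "b \<in> borel_measurable M"
    "\<And>z. z \<in> space M \<Longrightarrow> 0 \<le> prior z" "\<And>z. z \<in> space M \<Longrightarrow> 0 \<le> a z"
    "\<And>z. z \<in> space M \<Longrightarrow> 0 \<le> b z"
    "0 < marginal_likelihood M prior a" "(\<integral>\<^sup>+z. ennreal (prior z * (a z * b z)) \<partial>M) < \<infinity>"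
  shows "integrable (density M (\<lambda>z. ennreal (posterior M prior a z))) b"
    and "(\<integral>z. b z \<partial>density M (\<lambda>z. ennreal (posterior M prior a z))) =
      marginal_likelihood M prior (\<lambda>z. a z * b z) / marginal_likelihood M prior a"
proof -
  let ?Q = "density M (\<lambda>z. ennreal (posterior M prior a z))"
  have "(\<integral>\<^sup>+z. ennreal (prior z * (a z * b z)) \<partial>M) =
      ennreal (marginal_likelihood M prior (\<lambda>z. a z * b z))"
    using assms(8) by (simp add: marginal_likelihood_def less_top)
  then have nn: "(\<integral>\<^sup>+z. ennreal (b z) \<partial>?Q) =
      ennreal (marginal_likelihood M prior (\<lambda>z. a z * b z) / marginal_likelihood M prior a)"
    using assms by (simp add: nn_integral_posterior mult.assoc ennreal_mult'[symmetric] less_imp_le)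
  have b: "b \<in> borel_measurable ?Q" "AE z in ?Q. 0 \<le> b z"
    using assms(3,6) by auto
  from b nn show "integrable ?Q b" by (auto intro: integrableI_nonneg)
  from b nn show "(\<integral>z. b z \<partial>?Q) =
      marginal_likelihood M prior (\<lambda>z. a z * b z) / marginal_likelihood M prior a"
    using assms(4-7) by (simp add: integral_eq_nn_integral marginal_likelihood_def)
qed

lemma (in sigma_finite_measure) ln_marginal_likelihood_ge_elbo:
  fixes prior a b :: "'a \<Rightarrow> real"
  defines "A \<equiv> marginal_likelihood M prior a" and "B \<equiv> marginal_likelihood M prior b"
    and "E \<equiv> marginal_likelihood M prior (\<lambda>z. a z * b z)"
    and "Q \<equiv> density M (\<lambda>z. ennreal (posterior M prior a z))"
  assumes [measurable]:
      "prior \<in> borel_measurable M" "a \<in> borel_measurable M" "b \<in> borel_measurable M"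
    and pos: "\<And>z. z \<in> space M \<Longrightarrow> 0 < prior z" "\<And>z. z \<in> space M \<Longrightarrow> 0 < a z"
      "\<And>z. z \<in> space M \<Longrightarrow> 0 < b z"
    and norm: "(\<integral>\<^sup>+z. ennreal (prior z) \<partial>M) = 1"
    and fin: "(\<integral>\<^sup>+z. ennreal (prior z * a z) \<partial>M) < \<infinity>" "(\<integral>\<^sup>+z. ennreal (prior z * b z) \<partial>M) < \<infinity>"
      "(\<integral>\<^sup>+z. ennreal (prior z * (a z * b z)) \<partial>M) < \<infinity>"
    and int: "integrable Q (\<lambda>z. ln (a z))"
      "integrable Q (\<lambda>z. ln (posterior M prior a z / posterior M prior b z))"
  shows "ln (E / A) + ln A \<ge> (\<integral>z. ln (a z) \<partial>Q) + ln B
    - KL_divergence (exp 1) (density M (\<lambda>z. ennreal (posterior M prior b z))) Q"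
proof -
  have "emeasure M (space M) \<noteq> 0"
    using norm
    by (intro emeasure_space_neq_0_if_nn_integral_neq_0[where f="\<lambda>z. ennreal (prior z)"]) simp
  then have A: "0 < A" and B: "0 < B"
    unfolding A_def B_def using pos fin by (auto intro!: marginal_likelihood_pos)
  interpret Q: prob_space Q
    unfolding Q_def using A pos by (intro prob_space_posterior) (auto simp: A_def less_imp_le)
  have space_Q: "space Q = space M" by (simp add: Q_def)
  have ln_ratio: "\<And>z. z \<in> space Q \<Longrightarrow>
      ln (posterior M prior a z / posterior M prior b z) = ln (a z) - ln (b z) + (ln B - ln A)"
    using pos A B by (simp add: space_Q ln_posterior_ratio A_def B_def)
  have int_ln_b: "integrable Q (\<lambda>z. ln (b z))"
  proof -
    have "integrable Q
        (\<lambda>z. ln (a z) - ln (posterior M prior a z / posterior M prior b z) + (ln B - ln A))"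
      using int by simp
    then show ?thesis by (simp add: ln_ratio cong: Bochner_Integration.integrable_cong)
  qed
  have KL: "KL_divergence (exp 1) (density M (\<lambda>z. ennreal (posterior M prior b z))) Q =
      (\<integral>z. ln (a z) \<partial>Q) - (\<integral>z. ln (b z) \<partial>Q) + (ln B - ln A)"
  proof -
    have "KL_divergence (exp 1) (density M (\<lambda>z. ennreal (posterior M prior b z))) Q =
        (\<integral>z. ln (posterior M prior a z / posterior M prior b z) \<partial>Q)"
      unfolding Q_def using pos A B
      by (intro KL_density_density_eq_integral_ln) (auto simp: posterior_def A_def B_def less_imp_le)
    also have "\<dots> = (\<integral>z. ln (a z) - ln (b z) + (ln B - ln A) \<partial>Q)"
      by (simp add: ln_ratio cong: Bochner_Integration.integral_cong)
    also have "\<dots> = (\<integral>z. ln (a z) \<partial>Q) - (\<integral>z. ln (b z) \<partial>Q) + (ln B - ln A)"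
      using int(1) int_ln_b by (simp add: Q.prob_space)
    finally show ?thesis .
  qed
  have int_b: "integrable Q b" and "Q.expectation b = E / A"
    using integral_posterior[of prior M a b] pos A fin(3)
    by (auto simp: Q_def E_def A_def less_imp_le)
  moreover have "(\<integral>z. ln (b z) \<partial>Q) \<le> ln (Q.expectation b)"
    using pos by (intro Q.integral_ln_le_ln_expectation[OF int_b _ int_ln_b]) (auto simp: space_Q)
  ultimately have "(\<integral>z. ln (b z) \<partial>Q) \<le> ln (E / A)" by simp
  then show ?thesis by (simp add: KL)
qed

lemma cond_cmult_cancel: "0 < c \<Longrightarrow> cond (ennreal c * a) (ennreal c * b) = cond a b"
  by (simp add: cond_def enn2real_mult)

lemma cond_mult_self: "0 < b \<Longrightarrow> b < \<infinity> \<Longrightarrow> cond (b * a) b = enn2real a"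
  by (auto simp: cond_def enn2real_mult enn2real_eq_0_iff)

lemma density_cong_space:
  "(\<And>w. w \<in> space M \<Longrightarrow> f w = f' w) \<Longrightarrow> density M f = density M f'"
  by (simp add: density_def cong: nn_integral_cong)

locale counterfactual_bayes_net = MX: sigma_finite_measure MX + MZ: sigma_finite_measure MZ
  for MG :: "'g measure" and MX :: "'x measure" and MZ :: "'z measure"
    and MT :: "'t measure" and MY :: "'y measure" +
  fixes p :: "'g \<Rightarrow> 'x \<Rightarrow> 'z \<Rightarrow> 't \<Rightarrow> 't \<Rightarrow> 'y \<Rightarrow> 'y \<Rightarrow> real"
    and pX :: "'x \<Rightarrow> real" and pG :: "'x \<Rightarrow> 'g \<Rightarrow> real"
    and pT :: "'x \<Rightarrow> 't \<Rightarrow> real" and pTp :: "'x \<Rightarrow> 't \<Rightarrow> real"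
    and pZ :: "'g \<Rightarrow> 'x \<Rightarrow> 'z \<Rightarrow> real"
    and pY :: "'z \<Rightarrow> 't \<Rightarrow> 'y \<Rightarrow> real" and pYp :: "'z \<Rightarrow> 't \<Rightarrow> 'y \<Rightarrow> real"
  assumes meas [measurable]: "pX \<in> borel_measurable MX"
      "(\<lambda>(x, g). pG x g) \<in> borel_measurable (MX \<Otimes>\<^sub>M MG)"
      "(\<lambda>(x, t). pT x t) \<in> borel_measurable (MX \<Otimes>\<^sub>M MT)"
      "(\<lambda>(x, t). pTp x t) \<in> borel_measurable (MX \<Otimes>\<^sub>M MT)"
      "(\<lambda>(g, x, z). pZ g x z) \<in> borel_measurable (MG \<Otimes>\<^sub>M MX \<Otimes>\<^sub>M MZ)"
      "(\<lambda>(z, t, y). pY z t y) \<in> borel_measurable (MZ \<Otimes>\<^sub>M MT \<Otimes>\<^sub>M MY)"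
      "(\<lambda>(z, t, y). pYp z t y) \<in> borel_measurable (MZ \<Otimes>\<^sub>M MT \<Otimes>\<^sub>M MY)"
    and norm: "(\<integral>\<^sup>+ x. ennreal (pX x) \<partial>MX) = 1"
      "\<And>x. x \<in> space MX \<Longrightarrow> (\<integral>\<^sup>+ g. ennreal (pG x g) \<partial>MG) = 1"
      "\<And>x. x \<in> space MX \<Longrightarrow> (\<integral>\<^sup>+ t. ennreal (pT x t) \<partial>MT) = 1"
      "\<And>x. x \<in> space MX \<Longrightarrow> (\<integral>\<^sup>+ t. ennreal (pTp x t) \<partial>MT) = 1"
      "\<And>g x. g \<in> space MG \<Longrightarrow> x \<in> space MX \<Longrightarrow> (\<integral>\<^sup>+ z. ennreal (pZ g x z) \<partial>MZ) = 1"
      "\<And>z t. z \<in> space MZ \<Longrightarrow> t \<in> space MT \<Longrightarrow> (\<integral>\<^sup>+ y. ennreal (pY z t y) \<partial>MY) = 1"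
      "\<And>z t. z \<in> space MZ \<Longrightarrow> t \<in> space MT \<Longrightarrow> (\<integral>\<^sup>+ y. ennreal (pYp z t y) \<partial>MY) = 1"
    and pos: "\<And>x. x \<in> space MX \<Longrightarrow> 0 < pX x"
      "\<And>x g. x \<in> space MX \<Longrightarrow> g \<in> space MG \<Longrightarrow> 0 < pG x g"
      "\<And>x t. x \<in> space MX \<Longrightarrow> t \<in> space MT \<Longrightarrow> 0 < pT x t"
      "\<And>x t. x \<in> space MX \<Longrightarrow> t \<in> space MT \<Longrightarrow> 0 < pTp x t"
      "\<And>g x z. g \<in> space MG \<Longrightarrow> x \<in> space MX \<Longrightarrow> z \<in> space MZ \<Longrightarrow> 0 < pZ g x z"
      "\<And>z t y. z \<in> space MZ \<Longrightarrow> t \<in> space MT \<Longrightarrow> y \<in> space MY \<Longrightarrow> 0 < pY z t y"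
      "\<And>z t y. z \<in> space MZ \<Longrightarrow> t \<in> space MT \<Longrightarrow> y \<in> space MY \<Longrightarrow> 0 < pYp z t y"
    and factorization: "\<And>g x z t tp y yp. g \<in> space MG \<Longrightarrow> x \<in> space MX \<Longrightarrow> z \<in> space MZ \<Longrightarrow>
        t \<in> space MT \<Longrightarrow> tp \<in> space MT \<Longrightarrow> y \<in> space MY \<Longrightarrow> yp \<in> space MY \<Longrightarrow>
        p g x z t tp y yp = pX x * pG x g * pT x t * pTp x tp * pZ g x z * pY z t y * pYp z tp yp"
begin

lemmas nonneg = pos[THEN less_imp_le]

lemma measurable_sections [measurable]:
  "x \<in> space MX \<Longrightarrow> pG x \<in> borel_measurable MG"
  "x \<in> space MX \<Longrightarrow> pT x \<in> borel_measurable MT"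
  "x \<in> space MX \<Longrightarrow> pTp x \<in> borel_measurable MT"
  "g \<in> space MG \<Longrightarrow> x \<in> space MX \<Longrightarrow> pZ g x \<in> borel_measurable MZ"
  "z \<in> space MZ \<Longrightarrow> t \<in> space MT \<Longrightarrow> pY z t \<in> borel_measurable MY"
  "z \<in> space MZ \<Longrightarrow> t \<in> space MT \<Longrightarrow> pYp z t \<in> borel_measurable MY"
  by measurable

lemma measurable_likelihoods [measurable]:
  assumes "t \<in> space MT" "y \<in> space MY"
  shows "(\<lambda>z. pY z t y) \<in> borel_measurable MZ" "(\<lambda>z. pYp z t y) \<in> borel_measurable MZ"
proof -
  have "(\<lambda>z. (\<lambda>(z, t, y). pY z t y) (z, t, y)) \<in> borel_measurable MZ"
    "(\<lambda>z. (\<lambda>(z, t, y). pYp z t y) (z, t, y)) \<in> borel_measurable MZ"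
    using assms by measurable
  then show "(\<lambda>z. pY z t y) \<in> borel_measurable MZ" "(\<lambda>z. pYp z t y) \<in> borel_measurable MZ"
    by simp_all
qed

lemma measurable_prior_section [measurable]:
  assumes "z \<in> space MZ"
  shows "(\<lambda>(g, x). pZ g x z) \<in> borel_measurable (MG \<Otimes>\<^sub>M MX)"
proof -
  have "(\<lambda>w. (\<lambda>(g, x, z). pZ g x z) (fst w, snd w, z)) \<in> borel_measurable (MG \<Otimes>\<^sub>M MX)"
    using assms by measurable
  then show ?thesis by (simp add: split_beta')
qed

lemma nn_integral_p_Yp:
  assumes "g \<in> space MG" "x \<in> space MX" "z \<in> space MZ" "t \<in> space MT" "tp \<in> space MT" "y \<in> space MY"
  shows "(\<integral>\<^sup>+yp. ennreal (p g x z t tp y yp) \<partial>MY) =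
    ennreal (pX x * pG x g * pT x t * pTp x tp * pZ g x z * pY z t y)"
  by (rule nn_integral_eq_cmult_normalized[where h="pYp z tp"])
    (use assms in \<open>auto simp: factorization intro!: norm mult_nonneg_nonneg nonneg\<close>)

lemma nn_integral_p_Y:
  assumes "g \<in> space MG" "x \<in> space MX" "z \<in> space MZ" "t \<in> space MT" "tp \<in> space MT" "yp \<in> space MY"
  shows "(\<integral>\<^sup>+y. ennreal (p g x z t tp y yp) \<partial>MY) =
    ennreal (pX x * pG x g * pT x t * pTp x tp * pZ g x z * pYp z tp yp)"
  by (rule nn_integral_eq_cmult_normalized[where h="pY z t"])
    (use assms in \<open>auto simp: factorization mult_ac intro!: norm mult_nonneg_nonneg nonneg\<close>)

lemma nn_integral_p_Y_Yp:
  assumes "g \<in> space MG" "x \<in> space MX" "z \<in> space MZ" "t \<in> space MT" "tp \<in> space MT"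
  shows "(\<integral>\<^sup>+y. \<integral>\<^sup>+yp. ennreal (p g x z t tp y yp) \<partial>MY \<partial>MY) =
    ennreal (pX x * pG x g * pT x t * pTp x tp * pZ g x z)"
  by (rule nn_integral_eq_cmult_normalized[where h="pY z t"])
    (use assms in \<open>auto simp: nn_integral_p_Yp intro!: norm mult_nonneg_nonneg nonneg\<close>)

lemma nn_integral_p_Tp_Y_Yp:
  assumes "g \<in> space MG" "x \<in> space MX" "z \<in> space MZ" "t \<in> space MT"
  shows "(\<integral>\<^sup>+tp. \<integral>\<^sup>+y. \<integral>\<^sup>+yp. ennreal (p g x z t tp y yp) \<partial>MY \<partial>MY \<partial>MT) =
    ennreal (pX x * pG x g * pT x t * pZ g x z)"
  by (rule nn_integral_eq_cmult_normalized[where h="pTp x"])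
    (use assms in \<open>auto simp: nn_integral_p_Y_Yp mult_ac intro!: norm mult_nonneg_nonneg nonneg\<close>)

lemma nn_integral_p_T_Y_Yp:
  assumes "g \<in> space MG" "x \<in> space MX" "z \<in> space MZ" "tp \<in> space MT"
  shows "(\<integral>\<^sup>+t. \<integral>\<^sup>+y. \<integral>\<^sup>+yp. ennreal (p g x z t tp y yp) \<partial>MY \<partial>MY \<partial>MT) =
    ennreal (pX x * pG x g * pTp x tp * pZ g x z)"
  by (rule nn_integral_eq_cmult_normalized[where h="pT x"])
    (use assms in \<open>auto simp: nn_integral_p_Y_Yp mult_ac intro!: norm mult_nonneg_nonneg nonneg\<close>)

lemma m_ZYGXT_eq:
  assumes "g \<in> space MG" "x \<in> space MX" "z \<in> space MZ" "t \<in> space MT" "y \<in> space MY"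
  shows "m_ZYGXT MT MY p g x t y z = ennreal (pX x * pG x g * pT x t * pZ g x z * pY z t y)"
  unfolding m_ZYGXT_def
  by (rule nn_integral_eq_cmult_normalized[where h="pTp x"])
    (use assms in \<open>auto simp: nn_integral_p_Yp mult_ac intro!: norm mult_nonneg_nonneg nonneg\<close>)

lemma m_ZYpGXTp_eq:
  assumes "g \<in> space MG" "x \<in> space MX" "z \<in> space MZ" "tp \<in> space MT" "yp \<in> space MY"
  shows "m_ZYpGXTp MT MY p g x tp yp z = ennreal (pX x * pG x g * pTp x tp * pZ g x z * pYp z tp yp)"
  unfolding m_ZYpGXTp_def
  by (rule nn_integral_eq_cmult_normalized[where h="pT x"])
    (use assms in \<open>auto simp: nn_integral_p_Y mult_ac intro!: norm mult_nonneg_nonneg nonneg\<close>)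

lemma m_YpYGXTTp_eq:
  assumes "g \<in> space MG" "x \<in> space MX" "t \<in> space MT" "tp \<in> space MT" "y \<in> space MY" "yp \<in> space MY"
  shows "m_YpYGXTTp MZ p g x t tp y yp = ennreal (pX x * pG x g * pT x t * pTp x tp) *
    (\<integral>\<^sup>+z. ennreal (pZ g x z * (pY z t y * pYp z tp yp)) \<partial>MZ)"
  unfolding m_YpYGXTTp_def
  by (rule nn_integral_eq_cmult)
    (use assms in \<open>auto simp: factorization mult_ac intro!: mult_nonneg_nonneg nonneg\<close>)

lemma m_YGXTTp_eq:
  assumes "g \<in> space MG" "x \<in> space MX" "t \<in> space MT" "tp \<in> space MT" "y \<in> space MY"
  shows "m_YGXTTp MZ MY p g x t tp y = ennreal (pX x * pG x g * pT x t * pTp x tp) *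
    (\<integral>\<^sup>+z. ennreal (pZ g x z * pY z t y) \<partial>MZ)"
  unfolding m_YGXTTp_def
  by (rule nn_integral_eq_cmult)
    (use assms in \<open>auto simp: nn_integral_p_Yp mult_ac intro!: mult_nonneg_nonneg nonneg\<close>)

lemma m_YGXT_eq:
  assumes "g \<in> space MG" "x \<in> space MX" "t \<in> space MT" "y \<in> space MY"
  shows "m_YGXT MZ MT MY p g x t y = ennreal (pX x * pG x g * pT x t) *
    (\<integral>\<^sup>+z. ennreal (pZ g x z * pY z t y) \<partial>MZ)"
  unfolding m_YGXT_def m_ZYGXT_def[symmetric] by (rule nn_integral_eq_cmult)
    (use assms in \<open>auto simp: m_ZYGXT_eq mult_ac intro!: mult_nonneg_nonneg nonneg\<close>)

lemma m_GXT_eq: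
  assumes "g \<in> space MG" "x \<in> space MX" "t \<in> space MT"
  shows "m_GXT MZ MT MY p g x t = ennreal (pX x * pG x g * pT x t)"
  unfolding m_GXT_def
  by (rule nn_integral_eq_cmult_normalized[where h="pZ g x"])
    (use assms in \<open>auto simp: nn_integral_p_Tp_Y_Yp intro!: norm mult_nonneg_nonneg nonneg\<close>)

lemma m_YpGXTp_eq:
  assumes "g \<in> space MG" "x \<in> space MX" "tp \<in> space MT" "yp \<in> space MY"
  shows "m_YpGXTp MZ MT MY p g x tp yp = ennreal (pX x * pG x g * pTp x tp) *
    (\<integral>\<^sup>+z. ennreal (pZ g x z * pYp z tp yp) \<partial>MZ)"
  unfolding m_YpGXTp_def m_ZYpGXTp_def[symmetric] by (rule nn_integral_eq_cmult)
    (use assms in \<open>auto simp: m_ZYpGXTp_eq mult_ac intro!: mult_nonneg_nonneg nonneg\<close>)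

lemma m_GXTp_eq:
  assumes "g \<in> space MG" "x \<in> space MX" "tp \<in> space MT"
  shows "m_GXTp MZ MT MY p g x tp = ennreal (pX x * pG x g * pTp x tp)"
  unfolding m_GXTp_def
  by (rule nn_integral_eq_cmult_normalized[where h="pZ g x"])
    (use assms in \<open>auto simp: nn_integral_p_T_Y_Yp intro!: norm mult_nonneg_nonneg nonneg\<close>)

lemma emeasure_spaces_neq_0: "emeasure MX (space MX) \<noteq> 0" "emeasure MG (space MG) \<noteq> 0"
proof -
  show "emeasure MX (space MX) \<noteq> 0"
    using norm(1)
    by (intro emeasure_space_neq_0_if_nn_integral_neq_0[where f="\<lambda>x. ennreal (pX x)"]) simp
  then obtain x where x: "x \<in> space MX" by fastforce
  show "emeasure MG (space MG) \<noteq> 0"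
    using norm(2)[OF x]
    by (intro emeasure_space_neq_0_if_nn_integral_neq_0[where f="\<lambda>g. ennreal (pG x g)"]) simp
qed

lemma m_ZT_eq:
  assumes "z \<in> space MZ" "t \<in> space MT"
  shows "m_ZT MG MX MT MY p z t = (\<integral>\<^sup>+g. \<integral>\<^sup>+x. ennreal (pX x * pG x g * pT x t * pZ g x z) \<partial>MX \<partial>MG)"
  unfolding m_ZT_def using assms by (simp add: nn_integral_p_Tp_Y_Yp cong: nn_integral_cong)

lemma measurable_m_ZT_integrand [measurable]:
  assumes "z \<in> space MZ" "t \<in> space MT"
  shows "(\<lambda>g. \<integral>\<^sup>+x. ennreal (pX x * pG x g * pT x t * pZ g x z) \<partial>MX) \<in> borel_measurable MG"
proof -
  note measurable_prior_section[OF assms(1), measurable]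
  show ?thesis using assms(2) by measurable
qed

lemma m_ZT_pos:
  assumes "z \<in> space MZ" "t \<in> space MT"
  shows "0 < m_ZT MG MX MT MY p z t"
  unfolding m_ZT_eq[OF assms]
proof (rule nn_integral_pos)
  fix g assume "g \<in> space MG"
  then show "0 < (\<integral>\<^sup>+x. ennreal (pX x * pG x g * pT x t * pZ g x z) \<partial>MX)"
    using assms emeasure_spaces_neq_0 by (intro nn_integral_pos) (auto intro!: mult_pos_pos pos)
qed (use assms emeasure_spaces_neq_0 in auto)

lemma m_ZTY_eq:
  assumes "z \<in> space MZ" "t \<in> space MT" "y \<in> space MY"
  shows "m_ZTY MG MX MT MY p z t y = m_ZT MG MX MT MY p z t * ennreal (pY z t y)"
proof -
  have "m_ZTY MG MX MT MY p z t y =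
      (\<integral>\<^sup>+g. \<integral>\<^sup>+x. ennreal (pX x * pG x g * pT x t * pZ g x z) * ennreal (pY z t y) \<partial>MX \<partial>MG)"
    unfolding m_ZTY_def m_ZYGXT_def[symmetric] using assms
    by (simp add: m_ZYGXT_eq ennreal_mult' nonneg cong: nn_integral_cong)
  also have "\<dots> =
      (\<integral>\<^sup>+g. (\<integral>\<^sup>+x. ennreal (pX x * pG x g * pT x t * pZ g x z) \<partial>MX) * ennreal (pY z t y) \<partial>MG)"
    using assms by (intro nn_integral_cong nn_integral_multc) measurable
  also have "\<dots> = m_ZT MG MX MT MY p z t * ennreal (pY z t y)"
    using assms by (simp add: m_ZT_eq nn_integral_multc measurable_m_ZT_integrand)
  finally show ?thesis .
qed

lemma c_Y_given_ZT_eq: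
  assumes "z \<in> space MZ" "t \<in> space MT" "y \<in> space MY" "m_ZT MG MX MT MY p z t < \<infinity>"
  shows "c_Y_given_ZT MG MX MT MY p z t y = pY z t y"
  using assms by (simp add: c_Y_given_ZT_def m_ZTY_eq cond_mult_self m_ZT_pos nonneg)

context
  fixes g x t tp y yp
  assumes point: "g \<in> space MG" "x \<in> space MX" "t \<in> space MT" "tp \<in> space MT"
    "y \<in> space MY" "yp \<in> space MY"
begin

lemma prefactors_pos:
  "0 < pX x * pG x g * pT x t" "0 < pX x * pG x g * pTp x tp"
  "0 < pX x * pG x g * pT x t * pTp x tp"
  using point by (simp_all add: pos)

lemma c_Yp_given_YGXTTp_eq:
  "c_Yp_given_YGXTTp MZ MY p g x t tp y yp =
    marginal_likelihood MZ (pZ g x) (\<lambda>z. pY z t y * pYp z tp yp) /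
    marginal_likelihood MZ (pZ g x) (\<lambda>z. pY z t y)"
  using point prefactors_pos
  by (simp add: c_Yp_given_YGXTTp_def m_YpYGXTTp_eq m_YGXTTp_eq cond_cmult_cancel)
    (simp add: cond_def marginal_likelihood_def)

lemma c_Y_given_GXT_eq:
  "c_Y_given_GXT MZ MT MY p g x t y = marginal_likelihood MZ (pZ g x) (\<lambda>z. pY z t y)"
  using point prefactors_pos
  by (simp add: c_Y_given_GXT_def m_YGXT_eq m_GXT_eq cond_mult_self marginal_likelihood_def)

lemma c_Yp_given_GXTp_eq:
  "c_Yp_given_GXTp MZ MT MY p g x tp yp = marginal_likelihood MZ (pZ g x) (\<lambda>z. pYp z tp yp)"
  using point prefactors_pos
  by (simp add: c_Yp_given_GXTp_def m_YpGXTp_eq m_GXTp_eq cond_mult_self marginal_likelihood_def)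

lemma c_Z_given_YGXT_eq:
  assumes "z \<in> space MZ"
  shows "c_Z_given_YGXT MZ MT MY p g x t y z = posterior MZ (pZ g x) (\<lambda>z. pY z t y) z"
proof -
  have "m_ZYGXT MT MY p g x t y z = ennreal ((pX x * pG x g * pT x t) * (pZ g x z * pY z t y))"
    using assms point by (simp add: m_ZYGXT_eq mult_ac)
  also have "\<dots> = ennreal (pX x * pG x g * pT x t) * ennreal (pZ g x z * pY z t y)"
    using prefactors_pos by (simp add: ennreal_mult' less_imp_le)
  finally show ?thesis
    using assms point prefactors_pos
    by (simp add: c_Z_given_YGXT_def m_YGXT_eq cond_cmult_cancel)
      (simp add: cond_def posterior_def marginal_likelihood_def pos less_imp_le)
qed

lemma c_Z_given_YpGXTp_eq:
  assumes "z \<in> space MZ"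
  shows "c_Z_given_YpGXTp MZ MT MY p g x tp yp z = posterior MZ (pZ g x) (\<lambda>z. pYp z tp yp) z"
proof -
  have "m_ZYpGXTp MT MY p g x tp yp z =
      ennreal ((pX x * pG x g * pTp x tp) * (pZ g x z * pYp z tp yp))"
    using assms point by (simp add: m_ZYpGXTp_eq mult_ac)
  also have "\<dots> = ennreal (pX x * pG x g * pTp x tp) * ennreal (pZ g x z * pYp z tp yp)"
    using prefactors_pos by (simp add: ennreal_mult' less_imp_le)
  finally show ?thesis
    using assms point prefactors_pos
    by (simp add: c_Z_given_YpGXTp_def m_YpGXTp_eq cond_cmult_cancel)
      (simp add: cond_def posterior_def marginal_likelihood_def pos less_imp_le)
qed

lemma density_c_Z_given_YGXT:
  "density MZ (\<lambda>z. ennreal (c_Z_given_YGXT MZ MT MY p g x t y z)) =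
    density MZ (\<lambda>z. ennreal (posterior MZ (pZ g x) (\<lambda>z. pY z t y) z))"
  by (intro density_cong_space) (simp add: c_Z_given_YGXT_eq)

lemma density_c_Z_given_YpGXTp:
  "density MZ (\<lambda>z. ennreal (c_Z_given_YpGXTp MZ MT MY p g x tp yp z)) =
    density MZ (\<lambda>z. ennreal (posterior MZ (pZ g x) (\<lambda>z. pYp z tp yp) z))"
  by (intro density_cong_space) (simp add: c_Z_given_YpGXTp_eq)

lemma counterfactual_elbo:
  defines "Q \<equiv> density MZ (\<lambda>z. ennreal (posterior MZ (pZ g x) (\<lambda>z. pY z t y) z))"
  assumes "m_YpYGXTTp MZ p g x t tp y yp < \<infinity>" "m_YGXT MZ MT MY p g x t y < \<infinity>"
    "m_YpGXTp MZ MT MY p g x tp yp < \<infinity>"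
    and "integrable Q (\<lambda>z. ln (pY z t y))"
    "integrable Q (\<lambda>z. ln (posterior MZ (pZ g x) (\<lambda>z. pY z t y) z /
      posterior MZ (pZ g x) (\<lambda>z. pYp z tp yp) z))"
  shows "ln (marginal_likelihood MZ (pZ g x) (\<lambda>z. pY z t y * pYp z tp yp) /
        marginal_likelihood MZ (pZ g x) (\<lambda>z. pY z t y))
      + ln (marginal_likelihood MZ (pZ g x) (\<lambda>z. pY z t y))
    \<ge> (\<integral>z. ln (pY z t y) \<partial>Q) + ln (marginal_likelihood MZ (pZ g x) (\<lambda>z. pYp z tp yp))
      - KL_divergence (exp 1)
          (density MZ (\<lambda>z. ennreal (posterior MZ (pZ g x) (\<lambda>z. pYp z tp yp) z))) Q"
  unfolding Q_def
proof (rule MZ.ln_marginal_likelihood_ge_elbo)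
  show "(\<integral>\<^sup>+z. ennreal (pZ g x z * pY z t y) \<partial>MZ) < \<infinity>"
    "(\<integral>\<^sup>+z. ennreal (pZ g x z * pYp z tp yp) \<partial>MZ) < \<infinity>"
    "(\<integral>\<^sup>+z. ennreal (pZ g x z * (pY z t y * pYp z tp yp)) \<partial>MZ) < \<infinity>"
    using assms(2-4) point prefactors_pos
    by (auto simp: m_YGXT_eq m_YpGXTp_eq m_YpYGXTTp_eq ennreal_mult_less_top)
qed (use assms(5,6) point in \<open>auto simp: Q_def intro!: pos norm\<close>)

end

end

theorem theorem1:
  fixes MG :: "'g measure" and MX :: "'x measure" and MZ :: "'z measure"
    and MT :: "'t measure" and MY :: "'y measure"
    and p :: "'g \<Rightarrow> 'x \<Rightarrow> 'z \<Rightarrow> 't \<Rightarrow> 't \<Rightarrow> 'y \<Rightarrow> 'y \<Rightarrow> real"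
    and pX :: "'x \<Rightarrow> real" and pG :: "'x \<Rightarrow> 'g \<Rightarrow> real"
    and pT :: "'x \<Rightarrow> 't \<Rightarrow> real" and pTp :: "'x \<Rightarrow> 't \<Rightarrow> real"
    and pZ :: "'g \<Rightarrow> 'x \<Rightarrow> 'z \<Rightarrow> real"
    and pY :: "'z \<Rightarrow> 't \<Rightarrow> 'y \<Rightarrow> real" and pYp :: "'z \<Rightarrow> 't \<Rightarrow> 'y \<Rightarrow> real"
    and g :: 'g and x :: 'x and t :: 't and tp :: 't and y :: 'y and yp :: 'y
  assumes sf: "sigma_finite_measure MG" "sigma_finite_measure MX" "sigma_finite_measure MZ"
      "sigma_finite_measure MT" "sigma_finite_measure MY"
    \<comment> \<open>measurability of the factors\<close>
    and meas: "pX \<in> borel_measurable MX"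
      "(\<lambda>(x, g). pG x g) \<in> borel_measurable (MX \<Otimes>\<^sub>M MG)"
      "(\<lambda>(x, t). pT x t) \<in> borel_measurable (MX \<Otimes>\<^sub>M MT)"
      "(\<lambda>(x, t). pTp x t) \<in> borel_measurable (MX \<Otimes>\<^sub>M MT)"
      "(\<lambda>(g, x, z). pZ g x z) \<in> borel_measurable (MG \<Otimes>\<^sub>M MX \<Otimes>\<^sub>M MZ)"
      "(\<lambda>(z, t, y). pY z t y) \<in> borel_measurable (MZ \<Otimes>\<^sub>M MT \<Otimes>\<^sub>M MY)"
      "(\<lambda>(z, t, y). pYp z t y) \<in> borel_measurable (MZ \<Otimes>\<^sub>M MT \<Otimes>\<^sub>M MY)"
    \<comment> \<open>the factors are (conditional) probability densities\<close>
    and norm: "(\<integral>\<^sup>+ x. ennreal (pX x) \<partial>MX) = 1"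
      "\<And>x. x \<in> space MX \<Longrightarrow> (\<integral>\<^sup>+ g. ennreal (pG x g) \<partial>MG) = 1"
      "\<And>x. x \<in> space MX \<Longrightarrow> (\<integral>\<^sup>+ t. ennreal (pT x t) \<partial>MT) = 1"
      "\<And>x. x \<in> space MX \<Longrightarrow> (\<integral>\<^sup>+ t. ennreal (pTp x t) \<partial>MT) = 1"
      "\<And>g x. g \<in> space MG \<Longrightarrow> x \<in> space MX \<Longrightarrow> (\<integral>\<^sup>+ z. ennreal (pZ g x z) \<partial>MZ) = 1"
      "\<And>z t. z \<in> space MZ \<Longrightarrow> t \<in> space MT \<Longrightarrow> (\<integral>\<^sup>+ y. ennreal (pY z t y) \<partial>MY) = 1"
      "\<And>z t. z \<in> space MZ \<Longrightarrow> t \<in> space MT \<Longrightarrow> (\<integral>\<^sup>+ y. ennreal (pYp z t y) \<partial>MY) = 1"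
    \<comment> \<open>positivity of the factors\<close>
    and pos: "\<And>x. x \<in> space MX \<Longrightarrow> 0 < pX x"
      "\<And>x g. x \<in> space MX \<Longrightarrow> g \<in> space MG \<Longrightarrow> 0 < pG x g"
      "\<And>x t. x \<in> space MX \<Longrightarrow> t \<in> space MT \<Longrightarrow> 0 < pT x t"
      "\<And>x t. x \<in> space MX \<Longrightarrow> t \<in> space MT \<Longrightarrow> 0 < pTp x t"
      "\<And>g x z. g \<in> space MG \<Longrightarrow> x \<in> space MX \<Longrightarrow> z \<in> space MZ \<Longrightarrow> 0 < pZ g x z"
      "\<And>z t y. z \<in> space MZ \<Longrightarrow> t \<in> space MT \<Longrightarrow> y \<in> space MY \<Longrightarrow> 0 < pY z t y"
      "\<And>z t y. z \<in> space MZ \<Longrightarrow> t \<in> space MT \<Longrightarrow> y \<in> space MY \<Longrightarrow> 0 < pYp z t y"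
    \<comment> \<open>factorization of the joint density according to the Bayesian network\<close>
    and fact: "\<And>g x z t tp y yp. g \<in> space MG \<Longrightarrow> x \<in> space MX \<Longrightarrow> z \<in> space MZ \<Longrightarrow>
        t \<in> space MT \<Longrightarrow> tp \<in> space MT \<Longrightarrow> y \<in> space MY \<Longrightarrow> yp \<in> space MY \<Longrightarrow>
        p g x z t tp y yp = pX x * pG x g * pT x t * pTp x tp * pZ g x z * pY z t y * pYp z tp yp"
    \<comment> \<open>the point at which the objective is evaluated\<close>
    and pt: "g \<in> space MG" "x \<in> space MX" "t \<in> space MT" "tp \<in> space MT"
      "y \<in> space MY" "yp \<in> space MY"
    \<comment> \<open>the conditional densities appearing exist (marginals are finite)\<close>
    and fin: "m_YpYGXTTp MZ p g x t tp y yp < \<infinity>" "m_YGXTTp MZ MY p g x t tp y < \<infinity>"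
      "m_YGXT MZ MT MY p g x t y < \<infinity>" "m_GXT MZ MT MY p g x t < \<infinity>"
      "m_YpGXTp MZ MT MY p g x tp yp < \<infinity>" "m_GXTp MZ MT MY p g x tp < \<infinity>"
      "\<And>z. z \<in> space MZ \<Longrightarrow> m_ZYGXT MT MY p g x t y z < \<infinity>"
      "\<And>z. z \<in> space MZ \<Longrightarrow> m_ZYpGXTp MT MY p g x tp yp z < \<infinity>"
      "\<And>z. z \<in> space MZ \<Longrightarrow> m_ZTY MG MX MT MY p z t y < \<infinity>"
      "\<And>z. z \<in> space MZ \<Longrightarrow> m_ZT MG MX MT MY p z t < \<infinity>"
    \<comment> \<open>the expectation and the KL divergence on the right-hand side are finite\<close>
    and int: "integrable (density MZ (\<lambda>z. ennreal (c_Z_given_YGXT MZ MT MY p g x t y z)))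
                (\<lambda>z. ln (c_Y_given_ZT MG MX MT MY p z t y))"
      "integrable (density MZ (\<lambda>z. ennreal (c_Z_given_YGXT MZ MT MY p g x t y z)))
                (\<lambda>z. ln (c_Z_given_YGXT MZ MT MY p g x t y z / c_Z_given_YpGXTp MZ MT MY p g x tp yp z))"
  shows "ln (c_Yp_given_YGXTTp MZ MY p g x t tp y yp) + ln (c_Y_given_GXT MZ MT MY p g x t y)
     \<ge> (\<integral>z. ln (c_Y_given_ZT MG MX MT MY p z t y)
            \<partial>density MZ (\<lambda>z. ennreal (c_Z_given_YGXT MZ MT MY p g x t y z)))
       + ln (c_Yp_given_GXTp MZ MT MY p g x tp yp)
       - KL_divergence (exp 1)
           (density MZ (\<lambda>z. ennreal (c_Z_given_YpGXTp MZ MT MY p g x tp yp z)))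
           (density MZ (\<lambda>z. ennreal (c_Z_given_YGXT MZ MT MY p g x t y z)))"
proof -
  interpret counterfactual_bayes_net MG MX MZ MT MY p pX pG pT pTp pZ pY pYp
    by (rule counterfactual_bayes_net.intro[OF sf(2,3) counterfactual_bayes_net_axioms.intro])
      (fact meas norm pos fact)+
  define Q where "Q = density MZ (\<lambda>z. ennreal (posterior MZ (pZ g x) (\<lambda>z. pY z t y) z))"
  have likelihood: "\<And>z. z \<in> space Q \<Longrightarrow> ln (c_Y_given_ZT MG MX MT MY p z t y) = ln (pY z t y)"
    using pt fin(10) by (simp add: Q_def c_Y_given_ZT_eq)
  have ratio: "\<And>z. z \<in> space Q \<Longrightarrow>
      ln (c_Z_given_YGXT MZ MT MY p g x t y z / c_Z_given_YpGXTp MZ MT MY p g x tp yp z) =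
      ln (posterior MZ (pZ g x) (\<lambda>z. pY z t y) z / posterior MZ (pZ g x) (\<lambda>z. pYp z tp yp) z)"
    using pt by (simp add: Q_def c_Z_given_YGXT_eq c_Z_given_YpGXTp_eq)
  have "integrable Q (\<lambda>z. ln (pY z t y))"
    "integrable Q (\<lambda>z. ln (posterior MZ (pZ g x) (\<lambda>z. pY z t y) z /
      posterior MZ (pZ g x) (\<lambda>z. pYp z tp yp) z))"
    using int pt by (simp_all add: density_c_Z_given_YGXT Q_def[symmetric] likelihood ratio
        cong: Bochner_Integration.integrable_cong)
  from counterfactual_elbo[OF pt fin(1,3,5) this[unfolded Q_def]] show ?thesis
    using pt by (simp add: density_c_Z_given_YGXT density_c_Z_given_YpGXTp Q_def[symmetric]
      c_Yp_given_YGXTTp_eq c_Y_given_GXT_eq c_Yp_given_GXTp_eq likelihood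
      cong: Bochner_Integration.integral_cong)
qed

end
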